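(* Let $N \ge 2$, let $0 \le z_1 < z_2 < \dots < z_N < 1$, let $\alpha_1, \dots, \alpha_N > 0$ with $\sum_{i=1}^N \alpha_i = 1$, and let $\mu = \sum_{i=1}^N \alpha_i \delta_{z_i}$ on $\mathcal I = [0,1]$. Then the $\mu$-energy form $\mathcal E(f,g) = \langle \nabla^{\mu} f, \nabla^{\mu} g\rangle_\mu$, defined for $f,g \in \mathscr D^1_\mu$, is a Dirichlet form on $L^2_\mu$ (i.e. it is a symmetric, non-negative, closed bilinear form with the Markov property: for every $f$ in its domain, $\hat f = \min(\max(f,0),1)$ is in the domain and $\mathcal E(\hat f,\hat f) \le \mathcal E(f,f)$).
   Context: $\delta_z$ denotes the Dirac measure at $z$. $L^2_\mu$ is the space of ($\mu$-a.e. equivalence classes of) real-valued square-integrable functions on $[0,1]$ with inner product $\langle f,g\rangle_\mu = \sum_{i=1}^N \alpha_i f(z_i) g(z_i)$. The set of $\mu$-differentiable functions with periodic boundary conditions is $\mathscr D^1_\mu = \{ f : [0,1]\to\mathbb R \text{ square-integrable w.r.t. } \mu : \exists f' \in L^2_\mu \text{ with } f(0)=f(1) \text{ and } f(x) = f(0) + \int \mathbf 1_{[0,x)} f' \, d\mu \text{ for all } x \in [0,1]\}$, where $[0,0)=\emptyset$; $f'$ is unique in $L^2_\mu$ and the $\mu$-derivative is $\nabla^\mu f := f'$. Equivalently $f(x) = f(0) + \sum_{i: z_i < x} \alpha_i \nabla^\mu f(z_i)$. Every class in $L^2_\mu$ has a representative in $\mathscr D^1_\mu$, and $\mathscr D^1_\mu$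 is identified with $L^2_\mu$ in this way. Explicitly, $\nabla^\mu f(z_n) = (f(z_{n+1}) - f(z_n))/\alpha_n$ for $n \in \{1,\dots,N-1\}$ and $\nabla^\mu f(z_N) = (f(z_1) - f(z_N))/\alpha_N$. *)

theory Defs
  imports Complex_Main
begin

text \<open>Atoms are indexed 0-based: z 0 < ... < z (N-1), weights alpha 0, ..., alpha (N-1).
  Functions on [0,1] are modelled as real => real (values outside [0,1] are irrelevant).
  Since mu has finitely many atoms, every function is square-integrable w.r.t. mu.\<close>

definition mu_inner :: "nat \<Rightarrow> (nat \<Rightarrow> real) \<Rightarrow> (nat \<Rightarrow> real) \<Rightarrow> (real \<Rightarrow> real) \<Rightarrow> (real \<Rightarrow> real) \<Rightarrow> real" where
  "mu_inner N \<alpha> z f g = (\<Sum>i<N. \<alpha> i * f (z i) * g (z i))"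

definition is_mu_deriv :: "nat \<Rightarrow> (nat \<Rightarrow> real) \<Rightarrow> (nat \<Rightarrow> real) \<Rightarrow> (real \<Rightarrow> real) \<Rightarrow> (real \<Rightarrow> real) \<Rightarrow> bool" where
  "is_mu_deriv N \<alpha> z f f' \<longleftrightarrow> f 0 = f 1 \<and>
     (\<forall>x\<in>{0..1}. f x = f 0 + (\<Sum>i\<in>{i. i < N \<and> z i < x}. \<alpha> i * f' (z i)))"

definition mu_D1 :: "nat \<Rightarrow> (nat \<Rightarrow> real) \<Rightarrow> (nat \<Rightarrow> real) \<Rightarrow> (real \<Rightarrow> real) set" where
  "mu_D1 N \<alpha> z = {f. \<exists>f'. is_mu_deriv N \<alpha> z f f'}"

definition mu_grad :: "nat \<Rightarrow> (nat \<Rightarrow> real) \<Rightarrow> (nat \<Rightarrow> real) \<Rightarrow> (real \<Rightarrow> real) \<Rightarrow> (real \<Rightarrow> real)" where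
  "mu_grad N \<alpha> z f = (SOME f'. is_mu_deriv N \<alpha> z f f')"

definition mu_energy :: "nat \<Rightarrow> (nat \<Rightarrow> real) \<Rightarrow> (nat \<Rightarrow> real) \<Rightarrow> (real \<Rightarrow> real) \<Rightarrow> (real \<Rightarrow> real) \<Rightarrow> real" where
  "mu_energy N \<alpha> z f g = mu_inner N \<alpha> z (mu_grad N \<alpha> z f) (mu_grad N \<alpha> z g)"

text \<open>Dirichlet form on a (pre-)Hilbert space of functions H with semi-inner product ip
  (elements identified when ip (f-g) (f-g) = 0), with domain D and form E.\<close>
definition dirichlet_form ::
  "(real \<Rightarrow> real) set \<Rightarrow> ((real \<Rightarrow> real) \<Rightarrow> (real \<Rightarrow> real) \<Rightarrow> real) \<Rightarrow>
   (real \<Rightarrow> real) set \<Rightarrow> ((real \<Rightarrow> real) \<Rightarrow> (real \<Rightarrow> real) \<Rightarrow> real) \<Rightarrow> bool" where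
  "dirichlet_form H ip D E \<longleftrightarrow>
     \<comment> \<open>D is a linear subspace of H\<close>
     D \<subseteq> H \<and> (\<lambda>x. 0) \<in> D \<and>
     (\<forall>f\<in>D. \<forall>g\<in>D. (\<lambda>x. f x + g x) \<in> D) \<and>
     (\<forall>c. \<forall>f\<in>D. (\<lambda>x. c * f x) \<in> D) \<and>
     \<comment> \<open>D is dense in H\<close>
     (\<forall>f\<in>H. \<forall>\<epsilon>>0. \<exists>g\<in>D. ip (\<lambda>x. f x - g x) (\<lambda>x. f x - g x) < \<epsilon>) \<and>
     \<comment> \<open>E is well defined on equivalence classes\<close>
     (\<forall>f\<in>D. \<forall>g\<in>D. \<forall>h\<in>D. ip (\<lambda>x. f x - g x) (\<lambda>x. f x - g x) = 0 \<longrightarrow> E f h = E g h) \<and>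
     \<comment> \<open>bilinear\<close>
     (\<forall>f\<in>D. \<forall>g\<in>D. \<forall>h\<in>D. E (\<lambda>x. f x + g x) h = E f h + E g h) \<and>
     (\<forall>c. \<forall>f\<in>D. \<forall>g\<in>D. E (\<lambda>x. c * f x) g = c * E f g) \<and>
     \<comment> \<open>symmetric\<close>
     (\<forall>f\<in>D. \<forall>g\<in>D. E f g = E g f) \<and>
     \<comment> \<open>non-negative\<close>
     (\<forall>f\<in>D. 0 \<le> E f f) \<and>
     \<comment> \<open>closed: D complete w.r.t. the E_1 norm\<close>
     (\<forall>u :: nat \<Rightarrow> real \<Rightarrow> real. (\<forall>n. u n \<in> D) \<longrightarrow>
        (\<forall>\<epsilon>>0. \<exists>M. \<forall>n\<ge>M. \<forall>m\<ge>M.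
            E (\<lambda>x. u n x - u m x) (\<lambda>x. u n x - u m x)
          + ip (\<lambda>x. u n x - u m x) (\<lambda>x. u n x - u m x) < \<epsilon>) \<longrightarrow>
        (\<exists>v\<in>D. (\<lambda>n. E (\<lambda>x. u n x - v x) (\<lambda>x. u n x - v x)
                    + ip (\<lambda>x. u n x - v x) (\<lambda>x. u n x - v x)) \<longlonglongrightarrow> 0)) \<and>
     \<comment> \<open>Markov property\<close>
     (\<forall>f\<in>D. (\<lambda>x. min (max (f x) 0) 1) \<in> D \<and>
        E (\<lambda>x. min (max (f x) 0) 1) (\<lambda>x. min (max (f x) 0) 1) \<le> E f f)"

end

theory Submission
  imports Defs
begin

text \<open>A function has a \<open>\<mu>\<close>-derivative exactly when it is periodic and constant on each gap
  between consecutive atoms, i.e. when it is a step function determined by its values at the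
  atoms; the \<open>\<mu>\<close>-derivative at \<open>z k\<close> is then the cyclic difference quotient
  \<open>(f (z (k+1)) - f (z k)) / \<alpha> k\<close>. Hence \<open>\<E>\<close> is a positive semidefinite quadratic form in
  the finitely many atom values. Closedness follows because the \<open>\<mu>\<close>-norm controls every
  atom value, so an \<open>\<E>\<^sub>1\<close>-Cauchy sequence converges at each atom; the Markov property
  holds because clamping to \<open>[0,1]\<close> is 1-Lipschitz and so shrinks every difference quotient.\<close>

lemma clamp_dist_le: "\<bar>min (max a 0) 1 - min (max b 0) 1\<bar> \<le> \<bar>a - (b::real)\<bar>"
  by (auto simp: min_def max_def abs_if)

lemma mu_inner_self_ge_atom:
  assumes "\<And>i. i < N \<Longrightarrow> 0 \<le> \<alpha> i" and "i < N"
  shows "\<alpha> i * (h (z i))\<^sup>2 \<le> mu_inner N \<alpha> z h h"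
proof -
  have "\<alpha> i * h (z i) * h (z i) \<le> (\<Sum>j<N. \<alpha> j * h (z j) * h (z j))"
    by (rule member_le_sum) (use assms in \<open>auto simp: mult.assoc\<close>)
  then show ?thesis by (simp add: mu_inner_def power2_eq_square mult.assoc)
qed

lemma mu_inner_self_eq_0_atom:
  assumes "\<And>i. i < N \<Longrightarrow> 0 < \<alpha> i" and "mu_inner N \<alpha> z h h = 0" and "i < N"
  shows "h (z i) = 0"
proof -
  have "\<alpha> i * (h (z i))\<^sup>2 \<le> 0"
    using mu_inner_self_ge_atom[where N=N and \<alpha>=\<alpha> and i=i and z=z and h=h] assms
    by (simp add: less_imp_le)
  then show ?thesis using assms(1)[OF \<open>i < N\<close>] by (simp add: mult_le_0_iff)
qed

locale mu_atoms =
  fixes N :: nat and z \<alpha> :: "nat \<Rightarrow> real"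
  assumes N_pos: "0 < N" and z_first: "0 \<le> z 0" and z_last: "z (N - 1) < 1"
    and z_strict_mono: "\<And>i j. i < j \<Longrightarrow> j < N \<Longrightarrow> z i < z j"
    and \<alpha>_pos: "\<And>i. i < N \<Longrightarrow> 0 < \<alpha> i"
begin

definition atoms_below :: "real \<Rightarrow> nat set" where
  "atoms_below x = {i. i < N \<and> z i < x}"

definition next_atom :: "nat \<Rightarrow> nat" where
  "next_atom k = (if Suc k < N then Suc k else 0)"

definition diff_quot :: "(real \<Rightarrow> real) \<Rightarrow> nat \<Rightarrow> real" where
  "diff_quot f k = (f (z (next_atom k)) - f (z k)) / \<alpha> k"

definition is_step :: "(real \<Rightarrow> real) \<Rightarrow> bool" where
  "is_step g \<longleftrightarrow> g 0 = g 1 \<and>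
     (\<forall>x\<in>{0..1}. \<forall>y\<in>{0..1}. atoms_below x = atoms_below y \<longrightarrow> g x = g y)"

text \<open>The step function with value \<open>c k\<close> on \<open>(z (k-1), z k]\<close>; both the part up to \<open>z 0\<close>
  and the part after \<open>z (N-1)\<close> get \<open>c 0\<close>, which makes it periodic.\<close>
definition step_of :: "(nat \<Rightarrow> real) \<Rightarrow> real \<Rightarrow> real" where
  "step_of c x = c (if card (atoms_below x) < N then card (atoms_below x) else 0)"

lemma z_mono: "i \<le> j \<Longrightarrow> j < N \<Longrightarrow> z i \<le> z j"
  using z_strict_mono by (cases "i = j") (auto simp: le_less)

lemma z_inj: "i < N \<Longrightarrow> j < N \<Longrightarrow> z i = z j \<Longrightarrow> i = j"
  using z_strict_mono by (metis less_irrefl nat_neq_iff)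

lemma z_in_unit: "k < N \<Longrightarrow> z k \<in> {0..1}"
  using z_mono[of 0 k] z_mono[of k "N - 1"] z_first z_last by fastforce

lemma next_atom_less: "k < N \<Longrightarrow> next_atom k < N"
  using N_pos by (simp add: next_atom_def)

lemma atoms_below_eq_lessThan: "\<exists>m\<le>N. atoms_below x = {..<m} \<and> (m < N \<longrightarrow> x \<le> z m)"
proof (cases "\<exists>i<N. x \<le> z i")
  case True
  define m where "m = (LEAST i. i < N \<and> x \<le> z i)"
  have m: "m < N \<and> x \<le> z m" unfolding m_def by (rule LeastI_ex) (use True in auto)
  have "atoms_below x = {..<m}"
  proof (intro set_eqI iffI)
    fix i assume "i \<in> atoms_below x"
    then have "i < N" "z i < x" by (auto simp: atoms_below_def)
    then show "i \<in> {..<m}" using m z_mono[of m i] by (cases "m \<le> i") auto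
  next
    fix i assume "i \<in> {..<m}"
    then have "\<not> (i < N \<and> x \<le> z i)" unfolding m_def using not_less_Least by auto
    then show "i \<in> atoms_below x" using \<open>i \<in> {..<m}\<close> m by (auto simp: atoms_below_def)
  qed
  then show ?thesis using m by (intro exI[of _ m]) auto
next
  case False
  then show ?thesis by (intro exI[of _ N]) (auto simp: atoms_below_def not_le)
qed

lemma atoms_below_atom: "k < N \<Longrightarrow> atoms_below (z k) = {..<k}"
  using z_strict_mono z_mono[of k] by (auto simp: atoms_below_def) (meson leD not_less)

lemma atoms_below_1: "atoms_below 1 = {..<N}"
proof -
  have "z i < 1" if "i < N" for i
  proof -
    have "z i \<le> z (N - 1)" using z_mono[of i "N - 1"] that by simp
    then show ?thesis using z_last by simp
  qed
  then show ?thesis by (auto simp: atoms_below_def)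
qed

lemma atoms_below_0: "atoms_below 0 = {}"
  using z_in_unit by (force simp: atoms_below_def)

lemma is_mu_deriv_at_atom:
  assumes d: "is_mu_deriv N \<alpha> z f f'" and k: "k < N"
  shows "f' (z k) = diff_quot f k"
proof -
  have f_eq: "f x = f 0 + (\<Sum>i\<in>atoms_below x. \<alpha> i * f' (z i))" if "x \<in> {0..1}" for x
    using d that unfolding is_mu_deriv_def atoms_below_def by blast
  have f_atom: "f (z j) = f 0 + (\<Sum>i<j. \<alpha> i * f' (z i))" if "j < N" for j
    using f_eq[OF z_in_unit[OF that]] by (simp add: atoms_below_atom[OF that])
  have sum_Suc: "(\<Sum>i<Suc k. \<alpha> i * f' (z i)) = (\<Sum>i<k. \<alpha> i * f' (z i)) + \<alpha> k * f' (z k)"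
    by simp
  have "\<alpha> k * f' (z k) = f (z (next_atom k)) - f (z k)"
  proof (cases "Suc k < N")
    case True
    then have "next_atom k = Suc k" by (simp add: next_atom_def)
    then show ?thesis using f_atom[OF True] f_atom[OF k] sum_Suc by (simp only:)
  next
    case False
    then have N: "N = Suc k" using k by simp
    have "f 1 = f 0 + (\<Sum>i<N. \<alpha> i * f' (z i))" using f_eq[of 1] by (simp add: atoms_below_1)
    moreover have "f 1 = f 0" using d unfolding is_mu_deriv_def by argo
    ultimately have "(\<Sum>i<N. \<alpha> i * f' (z i)) = 0" by linarith
    then have "\<alpha> k * f' (z k) = - (\<Sum>i<k. \<alpha> i * f' (z i))" using sum_Suc unfolding N by simp
    moreover have "next_atom k = 0" using False by (simp add: next_atom_def)
    ultimately show ?thesis using f_atom[OF k] f_atom[OF N_pos] by simp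
  qed
  then show ?thesis using \<alpha>_pos[OF k] by (simp add: diff_quot_def field_simps)
qed

lemma mu_D1_imp_is_step:
  assumes "f \<in> mu_D1 N \<alpha> z"
  shows "is_step f"
proof -
  obtain f' where d: "is_mu_deriv N \<alpha> z f f'" using assms by (auto simp: mu_D1_def)
  have "f x = f 0 + (\<Sum>i\<in>atoms_below x. \<alpha> i * f' (z i))" if "x \<in> {0..1}" for x
    using d that unfolding is_mu_deriv_def atoms_below_def by blast
  moreover have "f 0 = f 1" using d unfolding is_mu_deriv_def by blast
  ultimately show ?thesis unfolding is_step_def by metis
qed

lemma sum_next_atom_telescope:
  assumes "m < N"
  shows "(\<Sum>i<m. h (next_atom i) - h i) = h m - (h 0 :: real)"
proof -
  have "(\<Sum>i<m. h (next_atom i) - h i) = (\<Sum>i<m. h (Suc i) - h i)"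
    using assms by (auto intro!: sum.cong simp: next_atom_def)
  then show ?thesis by (simp add: sum_lessThan_telescope)
qed

lemma sum_next_atom_cyclic: "(\<Sum>i<N. h (next_atom i) - h i) = (0 :: real)"
proof -
  obtain K where K: "N = Suc K" using N_pos by (cases N) auto
  then have "K < N" "\<not> Suc K < N" "{..<N} = insert K {..<K}" by auto
  then show ?thesis using sum_next_atom_telescope[of K h] by (simp add: next_atom_def)
qed

lemma is_step_eq_sum_diff:
  assumes g: "is_step g" and x: "x \<in> {0..1}"
  shows "g x = g 0 + (\<Sum>i\<in>atoms_below x. g (z (next_atom i)) - g (z i))"
proof -
  have g_const: "g x = g y" if "x \<in> {0..1}" "y \<in> {0..1}" "atoms_below x = atoms_below y" for x y
    using g that unfolding is_step_def by blast
  obtain m where m: "m \<le> N" "atoms_below x = {..<m}" "m < N \<longrightarrow> x \<le> z m"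
    using atoms_below_eq_lessThan by blast
  show ?thesis
  proof (cases "m < N")
    case True
    have "g (z 0) = g 0"
      using N_pos atoms_below_atom[of 0] atoms_below_0 z_in_unit[of 0] by (intro g_const) auto
    moreover have "g (z m) = g x"
      using True m atoms_below_atom[of m] z_in_unit[of m] x by (intro g_const) auto
    ultimately show ?thesis
      using m(2) sum_next_atom_telescope[OF True, of "\<lambda>i. g (z i)"] by simp
  next
    case False
    have "g 1 = g 0" using g unfolding is_step_def by argo
    then have "g x = g 0" using m False atoms_below_1 x g_const[of x 1] by simp
    then show ?thesis using m False sum_next_atom_cyclic[of "\<lambda>i. g (z i)"] by simp
  qed
qed

lemma is_step_imp_mu_D1:
  assumes g: "is_step g"
  shows "g \<in> mu_D1 N \<alpha> z"
proof -
  \<comment> \<open>Off the atoms the \<open>SOME\<close> is junk, but only the values of \<open>g'\<close> at atoms matter.\<close>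
  define g' where "g' y = diff_quot g (SOME k. k < N \<and> z k = y)" for y
  have "\<alpha> i * g' (z i) = g (z (next_atom i)) - g (z i)" if "i < N" for i
  proof -
    have "(SOME k. k < N \<and> z k = z i) = i"
      by (rule some_equality) (use that z_inj in auto)
    then show ?thesis using \<alpha>_pos[OF that] by (simp add: g'_def diff_quot_def)
  qed
  then have "g x = g 0 + (\<Sum>i\<in>atoms_below x. \<alpha> i * g' (z i))" if "x \<in> {0..1}" for x
    using is_step_eq_sum_diff[OF g that] by (simp add: atoms_below_def)
  moreover have "g 0 = g 1" using g unfolding is_step_def by argo
  ultimately have "is_mu_deriv N \<alpha> z g g'"
    unfolding is_mu_deriv_def atoms_below_def by (metis (no_types, lifting))
  then show ?thesis unfolding mu_D1_def by blast
qed

lemma mu_D1_iff_is_step: "f \<in> mu_D1 N \<alpha> z \<longleftrightarrow> is_step f"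
  using mu_D1_imp_is_step is_step_imp_mu_D1 by blast

lemma mu_D1_comp2:
  "f \<in> mu_D1 N \<alpha> z \<Longrightarrow> g \<in> mu_D1 N \<alpha> z \<Longrightarrow> (\<lambda>x. h (f x) (g x)) \<in> mu_D1 N \<alpha> z"
  unfolding mu_D1_iff_is_step is_step_def by metis

lemma mu_grad_at_atom:
  assumes "f \<in> mu_D1 N \<alpha> z" and "k < N"
  shows "mu_grad N \<alpha> z f (z k) = diff_quot f k"
proof -
  have "\<exists>f'. is_mu_deriv N \<alpha> z f f'" using assms(1) by (simp add: mu_D1_def)
  then have "is_mu_deriv N \<alpha> z f (mu_grad N \<alpha> z f)" unfolding mu_grad_def by (rule someI_ex)
  then show ?thesis using is_mu_deriv_at_atom assms(2) by blast
qed

lemma mu_energy_eq: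
  "f \<in> mu_D1 N \<alpha> z \<Longrightarrow> g \<in> mu_D1 N \<alpha> z \<Longrightarrow>
   mu_energy N \<alpha> z f g = (\<Sum>k<N. \<alpha> k * diff_quot f k * diff_quot g k)"
  unfolding mu_energy_def mu_inner_def by (auto intro!: sum.cong simp: mu_grad_at_atom)

lemma step_of_atom: "k < N \<Longrightarrow> step_of c (z k) = c k"
  by (simp add: step_of_def atoms_below_atom)

lemma step_of_in_mu_D1: "step_of c \<in> mu_D1 N \<alpha> z"
  using N_pos atoms_below_0 atoms_below_1
  by (auto simp: mu_D1_iff_is_step is_step_def step_of_def)

lemma mu_D1_dense:
  assumes "0 < \<epsilon>"
  shows "\<exists>g\<in>mu_D1 N \<alpha> z. mu_inner N \<alpha> z (\<lambda>x. f x - g x) (\<lambda>x. f x - g x) < \<epsilon>"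
proof (intro bexI)
  show "mu_inner N \<alpha> z (\<lambda>x. f x - step_of (\<lambda>k. f (z k)) x) (\<lambda>x. f x - step_of (\<lambda>k. f (z k)) x) < \<epsilon>"
    using assms by (simp add: mu_inner_def step_of_atom)
qed (rule step_of_in_mu_D1)

lemma mu_energy_nonneg: "f \<in> mu_D1 N \<alpha> z \<Longrightarrow> 0 \<le> mu_energy N \<alpha> z f f"
  using \<alpha>_pos by (simp add: mu_energy_eq mult.assoc) (intro sum_nonneg, simp add: less_imp_le)

lemma mu_energy_sym:
  "f \<in> mu_D1 N \<alpha> z \<Longrightarrow> g \<in> mu_D1 N \<alpha> z \<Longrightarrow> mu_energy N \<alpha> z f g = mu_energy N \<alpha> z g f"
  by (simp add: mu_energy_eq mult_ac)

lemma mu_energy_add_left: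
  assumes "f \<in> mu_D1 N \<alpha> z" "g \<in> mu_D1 N \<alpha> z" "h \<in> mu_D1 N \<alpha> z"
  shows "mu_energy N \<alpha> z (\<lambda>x. f x + g x) h = mu_energy N \<alpha> z f h + mu_energy N \<alpha> z g h"
proof -
  have "diff_quot (\<lambda>x. f x + g x) k = diff_quot f k + diff_quot g k" for k
    by (simp add: diff_quot_def add_divide_distrib[symmetric])
  then show ?thesis
    using assms mu_D1_comp2[of f g "(+)"] by (simp add: mu_energy_eq ring_distribs sum.distrib)
qed

lemma mu_energy_scale_left:
  assumes "f \<in> mu_D1 N \<alpha> z" "g \<in> mu_D1 N \<alpha> z"
  shows "mu_energy N \<alpha> z (\<lambda>x. c * f x) g = c * mu_energy N \<alpha> z f g"
proof -
  have "diff_quot (\<lambda>x. c * f x) k = c * diff_quot f k" for k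
    by (simp add: diff_quot_def right_diff_distrib)
  then show ?thesis
    using assms mu_D1_comp2[of f f "\<lambda>a b. c * a"] by (simp add: mu_energy_eq sum_distrib_left mult_ac)
qed

lemma mu_energy_null_left:
  assumes "f \<in> mu_D1 N \<alpha> z" "g \<in> mu_D1 N \<alpha> z" "h \<in> mu_D1 N \<alpha> z"
    and "mu_inner N \<alpha> z (\<lambda>x. f x - g x) (\<lambda>x. f x - g x) = 0"
  shows "mu_energy N \<alpha> z f h = mu_energy N \<alpha> z g h"
proof -
  have "f (z i) = g (z i)" if "i < N" for i
    using mu_inner_self_eq_0_atom[OF \<alpha>_pos assms(4) that] by simp
  then have "diff_quot f k = diff_quot g k" if "k < N" for k
    using that next_atom_less by (simp add: diff_quot_def)
  then show ?thesis using assms by (simp add: mu_energy_eq)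
qed

lemma mu_energy_clamp_le:
  assumes "f \<in> mu_D1 N \<alpha> z"
  defines "F \<equiv> \<lambda>x. min (max (f x) 0) 1"
  shows "mu_energy N \<alpha> z F F \<le> mu_energy N \<alpha> z f f"
proof -
  have F: "F \<in> mu_D1 N \<alpha> z"
    unfolding F_def using mu_D1_comp2[OF assms(1) assms(1), of "\<lambda>a b. min (max a 0) 1"] .
  have "\<alpha> k * diff_quot F k * diff_quot F k \<le> \<alpha> k * diff_quot f k * diff_quot f k" if "k < N" for k
  proof -
    have "\<bar>diff_quot F k\<bar> \<le> \<bar>diff_quot f k\<bar>"
      using \<alpha>_pos[OF that] clamp_dist_le
      by (simp add: F_def diff_quot_def abs_divide divide_right_mono)
    then show ?thesis
      using \<alpha>_pos[OF that] by (simp add: abs_le_square_iff power2_eq_square mult.assoc)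
  qed
  then show ?thesis using F assms(1) by (simp add: mu_energy_eq) (rule sum_mono, simp)
qed

lemma mu_E1_tendsto_0:
  assumes "\<And>n. w n \<in> mu_D1 N \<alpha> z" and "\<And>i. i < N \<Longrightarrow> (\<lambda>n. w n (z i)) \<longlonglongrightarrow> 0"
  shows "(\<lambda>n. mu_energy N \<alpha> z (w n) (w n) + mu_inner N \<alpha> z (w n) (w n)) \<longlonglongrightarrow> 0"
proof -
  have "(\<lambda>n. diff_quot (w n) k) \<longlonglongrightarrow> 0" if "k < N" for k
  proof -
    have "(\<lambda>n. (w n (z (next_atom k)) - w n (z k)) / \<alpha> k) \<longlonglongrightarrow> (0 - 0) / \<alpha> k"
      using \<alpha>_pos[OF that] by (intro tendsto_intros assms(2) next_atom_less that) simp
    then show ?thesis by (simp add: diff_quot_def)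
  qed
  then have "(\<lambda>n. (\<Sum>k<N. \<alpha> k * diff_quot (w n) k * diff_quot (w n) k)
      + (\<Sum>i<N. \<alpha> i * w n (z i) * w n (z i))) \<longlonglongrightarrow> 0 + 0"
    using tendsto_mult[OF tendsto_mult[OF tendsto_const]] assms(2)
    by (intro tendsto_add tendsto_null_sum) fastforce+
  moreover have "mu_energy N \<alpha> z (w n) (w n) + mu_inner N \<alpha> z (w n) (w n)
      = (\<Sum>k<N. \<alpha> k * diff_quot (w n) k * diff_quot (w n) k) + (\<Sum>i<N. \<alpha> i * w n (z i) * w n (z i))" for n
    unfolding mu_energy_eq[OF assms(1) assms(1)] mu_inner_def ..
  ultimately show ?thesis by simp
qed

lemma mu_E1_Cauchy_atom:
  assumes uD: "\<And>n. u n \<in> mu_D1 N \<alpha> z" and i: "i < N"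
    and cauchy: "\<forall>\<epsilon>>0. \<exists>M. \<forall>n\<ge>M. \<forall>m\<ge>M.
      mu_energy N \<alpha> z (\<lambda>x. u n x - u m x) (\<lambda>x. u n x - u m x)
      + mu_inner N \<alpha> z (\<lambda>x. u n x - u m x) (\<lambda>x. u n x - u m x) < \<epsilon>"
  shows "Cauchy (\<lambda>n. u n (z i))"
proof (rule metric_CauchyI)
  fix e :: real assume e: "0 < e"
  then have "0 < \<alpha> i * e\<^sup>2" using \<alpha>_pos[OF i] by simp
  then obtain M where M: "\<forall>n\<ge>M. \<forall>m\<ge>M.
      mu_energy N \<alpha> z (\<lambda>x. u n x - u m x) (\<lambda>x. u n x - u m x)
      + mu_inner N \<alpha> z (\<lambda>x. u n x - u m x) (\<lambda>x. u n x - u m x) < \<alpha> i * e\<^sup>2"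
    using cauchy by blast
  show "\<exists>M. \<forall>m\<ge>M. \<forall>n\<ge>M. dist (u m (z i)) (u n (z i)) < e"
  proof (intro exI allI impI)
    fix m n assume "m \<ge> M" "n \<ge> M"
    let ?h = "\<lambda>x. u m x - u n x"
    have "mu_energy N \<alpha> z ?h ?h + mu_inner N \<alpha> z ?h ?h < \<alpha> i * e\<^sup>2"
      using M \<open>m \<ge> M\<close> \<open>n \<ge> M\<close> by blast
    moreover have "0 \<le> mu_energy N \<alpha> z ?h ?h"
      using mu_energy_nonneg mu_D1_comp2[OF uD uD] by blast
    moreover have "\<alpha> i * (?h (z i))\<^sup>2 \<le> mu_inner N \<alpha> z ?h ?h"
      by (rule mu_inner_self_ge_atom) (use \<alpha>_pos i in \<open>auto simp: less_imp_le\<close>)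
    ultimately have "\<alpha> i * (?h (z i))\<^sup>2 < \<alpha> i * e\<^sup>2" by linarith
    then have "(?h (z i))\<^sup>2 < e\<^sup>2" using \<alpha>_pos[OF i] by simp
    then have "\<bar>?h (z i)\<bar> < e" using e by (metis power2_abs power2_less_imp_less less_imp_le)
    then show "dist (u m (z i)) (u n (z i)) < e" by (simp add: dist_real_def)
  qed
qed

lemma mu_energy_closed:
  assumes uD: "\<And>n. u n \<in> mu_D1 N \<alpha> z"
    and cauchy: "\<forall>\<epsilon>>0. \<exists>M. \<forall>n\<ge>M. \<forall>m\<ge>M.
      mu_energy N \<alpha> z (\<lambda>x. u n x - u m x) (\<lambda>x. u n x - u m x)
      + mu_inner N \<alpha> z (\<lambda>x. u n x - u m x) (\<lambda>x. u n x - u m x) < \<epsilon>"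
  shows "\<exists>v\<in>mu_D1 N \<alpha> z. (\<lambda>n. mu_energy N \<alpha> z (\<lambda>x. u n x - v x) (\<lambda>x. u n x - v x)
      + mu_inner N \<alpha> z (\<lambda>x. u n x - v x) (\<lambda>x. u n x - v x)) \<longlonglongrightarrow> 0"
proof
  define c where "c i = lim (\<lambda>n. u n (z i))" for i
  have "(\<lambda>n. u n (z i)) \<longlonglongrightarrow> c i" if "i < N" for i
    using mu_E1_Cauchy_atom[OF uD that cauchy]
    unfolding c_def by (simp add: Cauchy_convergent_iff convergent_LIMSEQ_iff)
  then have "(\<lambda>n. u n (z i) - step_of c (z i)) \<longlonglongrightarrow> 0" if "i < N" for i
    using that by (simp add: step_of_atom LIM_zero)
  then show "(\<lambda>n. mu_energy N \<alpha> z (\<lambda>x. u n x - step_of c x) (\<lambda>x. u n x - step_of c x)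
      + mu_inner N \<alpha> z (\<lambda>x. u n x - step_of c x) (\<lambda>x. u n x - step_of c x)) \<longlonglongrightarrow> 0"
    using mu_D1_comp2[OF uD step_of_in_mu_D1] by (intro mu_E1_tendsto_0)
qed (rule step_of_in_mu_D1)

end

theorem theorem2p1:
  fixes N :: nat and z \<alpha> :: "nat \<Rightarrow> real"
  assumes "N \<ge> 2"
    and "0 \<le> z 0" and "z (N - 1) < 1"
    and "\<And>i j. i < j \<Longrightarrow> j < N \<Longrightarrow> z i < z j"
    and "\<And>i. i < N \<Longrightarrow> \<alpha> i > 0"
    and "(\<Sum>i<N. \<alpha> i) = 1"
  shows "dirichlet_form UNIV (mu_inner N \<alpha> z) (mu_D1 N \<alpha> z) (mu_energy N \<alpha> z)"
proof -
  interpret mu_atoms N z \<alpha> using assms by unfold_locales auto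
  let ?D = "mu_D1 N \<alpha> z"
  have "(\<lambda>x. 0) \<in> ?D" by (simp add: mu_D1_iff_is_step is_step_def)
  moreover have "\<forall>f\<in>?D. \<forall>g\<in>?D. (\<lambda>x. f x + g x) \<in> ?D"
    using mu_D1_comp2[where h="(+)"] by blast
  moreover have "\<forall>c. \<forall>f\<in>?D. (\<lambda>x. c * f x) \<in> ?D"
    using mu_D1_comp2[where h="\<lambda>a _. c * a" for c] by blast
  moreover have "\<forall>f\<in>?D. (\<lambda>x. min (max (f x) 0) 1) \<in> ?D"
    using mu_D1_comp2[where h="\<lambda>a _. min (max a 0) 1"] by blast
  ultimately show ?thesis
    unfolding dirichlet_form_def
    using mu_D1_dense mu_energy_null_left mu_energy_add_left mu_energy_scale_left
      mu_energy_sym mu_energy_nonneg mu_energy_closed mu_energy_clamp_le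
    by (intro conjI subset_UNIV ballI allI impI) auto
qed

end
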